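(* Let $L$ be a positive integer, let $a,b$ be positive divisors of $L$, and set $M=L/b$. Let ${\mathbf g}\in\mathbb C^L$ be a window (indices modulo $L$) such that $$K_{\mathbf g}:=\min_{t=0,\dots,L-1}\Big(\sum_{k=0}^{b-1}|g[t+kM]|^2\Big)>0.$$ Let ${\mathbf N}$ be a real Gaussian white noise of length $L$ with variance $\sigma_0^2$, and let ${\mathbf Z}$ be a zero-mean complex Gaussian random signal of length $L$ independent of ${\mathbf N}$. Fix a time index $n$ and a real number $\delta$, and define the random vector ${\mathbf G}\in\mathbb C^M$ by $${\mathbf G}[m]=\sum_{t=0}^{L-1}Z_t\,\overline{g}[t-na]\,e^{-2i\pi[m-\delta][t-an]/M}+\mathcal G_{\mathbf N}[m,n],\qquad m=0,\dots,M-1,$$ where $\mathcal G_{\mathbf N}[m,n]=\sum_{t=0}^{L-1}N_t\,\overline{g}[t-na]\,e^{-2i\pi mb(t-na)/L}$. Let $C_{\mathbf G}[m,m']=\mathbb E\big[{\mathbf G}[m]\overline{{\mathbf G}[m']}\big]$ be its covariance matrix. Then for all ${\mathbf x}\in\mathbb C^M$, $${\mathbf x}^*C_{\mathbf G}{\mathbf x}\ge\sigma_0^2K_{\mathbf g}\,\|{\mathbf x}\|_2^2,$$ and hence $C_{\mathbf G}$ is boundedly invertible.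
   Context: Signals are finite of length $L$ with periodic boundary conditions (indices modulo $L$). A real Gaussian white noise with variance $\sigma_0^2$ is a vector of i.i.d. $\mathcal N(0,\sigma_0^2)$ entries. In the paper ${\mathbf Z}$ is the analytic signal of a stationary Gaussian signal and ${\mathbf G}$ is the frequency-shifted Gabor transform slice ${\mathbf G}^{(n;\delta)}$ used to approximate the Gabor transform of a frequency-modulated noisy signal. *)

theory Defs
  imports "HOL-Probability.Probability"
begin

definition per :: "nat \<Rightarrow> (nat \<Rightarrow> 'b) \<Rightarrow> int \<Rightarrow> 'b" where
  "per L g t = g (nat (t mod int L))"

definition Kg :: "nat \<Rightarrow> nat \<Rightarrow> (nat \<Rightarrow> complex) \<Rightarrow> real" where
  "Kg L b g = Min ((\<lambda>t. \<Sum>k<b. (cmod (per L g (int t + int k * int (L div b))))\<^sup>2) ` {..<L})"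

definition real_gaussian_rv :: "'a measure \<Rightarrow> ('a \<Rightarrow> real) \<Rightarrow> bool" where
  "real_gaussian_rv P X \<longleftrightarrow> X \<in> borel_measurable P \<and>
     ((\<exists>c. AE \<omega> in P. X \<omega> = c) \<or>
      (\<exists>\<mu> \<sigma>. \<sigma> > 0 \<and> distributed P lborel X (normal_density \<mu> \<sigma>)))"

text \<open>A complex random signal Z_0..Z_{L-1} is (jointly) Gaussian iff the real vector of its
  real and imaginary parts is jointly Gaussian, i.e. every real linear combination of them
  is a (possibly degenerate) Gaussian random variable.\<close>
definition complex_gaussian_signal :: "'a measure \<Rightarrow> nat \<Rightarrow> (nat \<Rightarrow> 'a \<Rightarrow> complex) \<Rightarrow> bool" where
  "complex_gaussian_signal P L Z \<longleftrightarrow>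
     (\<forall>t<L. Z t \<in> borel_measurable P) \<and>
     (\<forall>c d :: nat \<Rightarrow> real.
        real_gaussian_rv P (\<lambda>\<omega>. \<Sum>t<L. c t * Re (Z t \<omega>) + d t * Im (Z t \<omega>)))"

end

theory Submission
  imports Defs "Jordan_Normal_Form.Determinant"
begin

text \<open>
  For x in C^M put Y = sum_m conj(x_m) G[m]; then x^* C_G x = E|Y|^2. The vector Y is a linear
  functional of Z plus sum_t beta_t N_t, where beta_t = conj(g[t - na] X(t - na)) and
  X(d) = sum_m x_m e^(2 pi i m d / M) is the trigonometric polynomial with coefficients x.
  The noise is centred and independent of Z, so the cross term vanishes and
  E|Y|^2 >= E|sum_t beta_t N_t|^2 = sigma_0^2 sum_t |beta_t|^2. Grouping t by residues r modulo M,
  X depends only on r while the window contributes at least K_g to each residue class, so by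
  Parseval sum_t |beta_t|^2 >= K_g M ||x||^2. A coercive quadratic form has trivial kernel,
  hence C_G is invertible.
\<close>

section \<open>Square-integrable random variables\<close>

definition square_integrable :: "'a measure \<Rightarrow> ('a \<Rightarrow> 'b::real_normed_vector) \<Rightarrow> bool" where
  "square_integrable M f \<longleftrightarrow> f \<in> borel_measurable M \<and> integrable M (\<lambda>x. (norm (f x))\<^sup>2)"

lemma square_integrableI:
  "f \<in> borel_measurable M \<Longrightarrow> integrable M (\<lambda>x. (norm (f x))\<^sup>2) \<Longrightarrow> square_integrable M f"
  unfolding square_integrable_def by (rule conjI)

lemma square_integrableD:
  assumes "square_integrable M f"
  shows "f \<in> borel_measurable M" "integrable M (\<lambda>x. (norm (f x))\<^sup>2)"
  using assms unfolding square_integrable_def by auto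

lemma square_integrable_add:
  fixes f g :: "'a \<Rightarrow> 'b::{real_normed_vector, second_countable_topology}"
  assumes "square_integrable M f" "square_integrable M g"
  shows "square_integrable M (\<lambda>x. f x + g x)"
proof -
  note [measurable] = square_integrableD(1)[OF assms(1)] square_integrableD(1)[OF assms(2)]
  have bound_integrable: "integrable M (\<lambda>x. 2 * (norm (f x))\<^sup>2 + 2 * (norm (g x))\<^sup>2)"
    using assms
    by (intro Bochner_Integration.integrable_add integrable_mult_right square_integrableD)
  have "(norm (f x + g x))\<^sup>2 \<le> 2 * (norm (f x))\<^sup>2 + 2 * (norm (g x))\<^sup>2" for x
  proof -
    have "(norm (f x + g x))\<^sup>2 \<le> (norm (f x) + norm (g x))\<^sup>2"
      by (intro power_mono norm_triangle_ineq) simp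
    also have "\<dots> \<le> 2 * (norm (f x))\<^sup>2 + 2 * (norm (g x))\<^sup>2"
      using sum_squares_bound[of "norm (f x)" "norm (g x)"] by (simp add: power2_sum)
    finally show ?thesis .
  qed
  then have "integrable M (\<lambda>x. (norm (f x + g x))\<^sup>2)"
    by (intro Bochner_Integration.integrable_bound[OF bound_integrable]) (simp_all, measurable)
  then show ?thesis
    by (intro square_integrableI) measurable
qed

lemma square_integrable_mult_left:
  fixes f :: "'a \<Rightarrow> 'b::{real_normed_div_algebra, second_countable_topology}"
  assumes "square_integrable M f"
  shows "square_integrable M (\<lambda>x. c * f x)"
proof (rule square_integrableI)
  note [measurable] = square_integrableD(1)[OF assms]
  show "(\<lambda>x. c * f x) \<in> borel_measurable M"
    by measurable
  show "integrable M (\<lambda>x. (norm (c * f x))\<^sup>2)"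
    using square_integrableD(2)[OF assms] by (simp add: norm_mult power_mult_distrib)
qed

lemma square_integrable_sum:
  fixes f :: "'i \<Rightarrow> 'a \<Rightarrow> 'b::{real_normed_vector, second_countable_topology}"
  assumes "\<And>i. i \<in> I \<Longrightarrow> square_integrable M (f i)"
  shows "square_integrable M (\<lambda>x. \<Sum>i\<in>I. f i x)"
  using assms
proof (induction I rule: infinite_finite_induct)
  case (insert i I)
  then show ?case by (simp add: square_integrable_add)
qed (simp_all add: square_integrableI)

lemma square_integrable_cnj:
  assumes "square_integrable M f"
  shows "square_integrable M (\<lambda>x. cnj (f x))"
  using square_integrableD[OF assms]
  by (intro square_integrableI)
     (simp_all add: borel_measurable_continuous_on[OF continuous_on_cnj[OF continuous_on_id]])

lemma square_integrable_of_real: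
  assumes "square_integrable M f"
  shows "square_integrable M
    (\<lambda>x. of_real (f x) :: 'b::{real_normed_algebra_1, second_countable_topology})"
proof (rule square_integrableI)
  note [measurable] = square_integrableD(1)[OF assms]
  show "(\<lambda>x. of_real (f x) :: 'b) \<in> borel_measurable M"
    by measurable
  show "integrable M (\<lambda>x. (norm (of_real (f x) :: 'b))\<^sup>2)"
    using square_integrableD(2)[OF assms] by simp
qed

lemma integrable_mult_square_integrable:
  fixes f g :: "'a \<Rightarrow> 'b::{real_normed_div_algebra, banach, second_countable_topology}"
  assumes "square_integrable M f" "square_integrable M g"
  shows "integrable M (\<lambda>x. f x * g x)"
proof -
  note [measurable] = square_integrableD(1)[OF assms(1)] square_integrableD(1)[OF assms(2)]
  have bound_integrable: "integrable M (\<lambda>x. (norm (f x))\<^sup>2 + (norm (g x))\<^sup>2)"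
    using assms by (intro Bochner_Integration.integrable_add square_integrableD)
  have "norm (f x * g x) \<le> (norm (f x))\<^sup>2 + (norm (g x))\<^sup>2" for x
  proof -
    have "norm (f x * g x) \<le> 2 * (norm (f x) * norm (g x))"
      by (simp add: norm_mult)
    also have "\<dots> \<le> (norm (f x))\<^sup>2 + (norm (g x))\<^sup>2"
      using sum_squares_bound[of "norm (f x)" "norm (g x)"] by (simp add: mult.assoc)
    finally show ?thesis .
  qed
  then have "AE x in M. norm (f x * g x) \<le> norm ((norm (f x))\<^sup>2 + (norm (g x))\<^sup>2)"
    by (intro AE_I2) (simp add: abs_le_iff)
  then show ?thesis
    by (intro Bochner_Integration.integrable_bound[OF bound_integrable]) measurable
qed

lemma (in finite_measure) integrable_if_square_integrable:
  fixes f :: "'a \<Rightarrow> 'b::{banach, second_countable_topology}"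
  assumes "square_integrable M f"
  shows "integrable M f"
proof -
  note [measurable] = square_integrableD(1)[OF assms]
  have "integrable M (\<lambda>x. norm (f x))"
    by (rule square_integrable_imp_integrable) (use square_integrableD(2)[OF assms] in simp_all)
  then show ?thesis
    by (simp add: integrable_norm_iff)
qed

lemma (in finite_measure) square_integrable_const: "square_integrable M (\<lambda>_. c)"
  by (intro square_integrableI) simp_all

context prob_space
begin

lemma normal_distributed_square_integrable:
  assumes "\<sigma> > 0" and D: "distributed M lborel X (normal_density \<mu> \<sigma>)"
  shows "square_integrable M X"
proof -
  have [measurable]: "X \<in> borel_measurable M"
    using distributed_measurable[OF D] by simp
  have "integrable M (\<lambda>\<omega>. (norm (X \<omega> - \<mu>))\<^sup>2)"
    using distributed_integrable[OF D, of "\<lambda>x. (x - \<mu>) ^ 2"]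
      integrable_normal_moment[of \<sigma> \<mu> 2] assms(1)
    by simp
  then have "square_integrable M (\<lambda>\<omega>. (X \<omega> - \<mu>) + \<mu>)"
    by (intro square_integrable_add square_integrable_const square_integrableI) measurable
  then show ?thesis
    by simp
qed

lemma real_gaussian_rv_square_integrable:
  assumes "real_gaussian_rv M X"
  shows "square_integrable M X"
proof -
  have [measurable]: "X \<in> borel_measurable M"
    using assms by (simp add: real_gaussian_rv_def)
  from assms consider c where "AE \<omega> in M. X \<omega> = c"
    | \<mu> \<sigma> where "\<sigma> > 0" "distributed M lborel X (normal_density \<mu> \<sigma>)"
    unfolding real_gaussian_rv_def by blast
  then show ?thesis
  proof cases
    case 1
    then have AE_const: "AE \<omega> in M. (norm c)\<^sup>2 = (norm (X \<omega>))\<^sup>2"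
      by auto
    have "integrable M (\<lambda>\<omega>. (norm (X \<omega>))\<^sup>2)"
      by (rule integrable_cong_AE_imp[OF integrable_const _ AE_const]) measurable
    then show ?thesis
      by (intro square_integrableI) measurable
  qed (rule normal_distributed_square_integrable)
qed

lemma complex_gaussian_signal_square_integrable:
  assumes "complex_gaussian_signal M L Z" "t < L"
  shows "square_integrable M (Z t)"
proof (rule square_integrableI)
  have coordinate: "real_gaussian_rv M (\<lambda>\<omega>. \<Sum>s<L. c s * Re (Z s \<omega>) + d s * Im (Z s \<omega>))" for c d
    using assms(1) by (simp add: complex_gaussian_signal_def)
  have "square_integrable M (\<lambda>\<omega>. Re (Z t \<omega>))"
    using coordinate[of "\<lambda>s. of_bool (s = t)" "\<lambda>_. 0"] assms(2)
    by (simp add: if_distrib cong: if_cong) (rule real_gaussian_rv_square_integrable)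
  moreover have "square_integrable M (\<lambda>\<omega>. Im (Z t \<omega>))"
    using coordinate[of "\<lambda>_. 0" "\<lambda>s. of_bool (s = t)"] assms(2)
    by (simp add: if_distrib cong: if_cong) (rule real_gaussian_rv_square_integrable)
  ultimately show "integrable M (\<lambda>\<omega>. (norm (Z t \<omega>))\<^sup>2)"
    unfolding cmod_power2
    by (intro Bochner_Integration.integrable_add) (auto dest: square_integrableD(2))
  show "Z t \<in> borel_measurable M"
    using assms by (simp add: complex_gaussian_signal_def)
qed

end

section \<open>Second moments of sums of independent variables\<close>

context prob_space
begin

lemma second_moment_add_indep:
  fixes X Y :: "'a \<Rightarrow> complex"
  assumes indep: "indep_var borel X borel Y"
    and X: "square_integrable M X" and Y: "square_integrable M Y" and "expectation Y = 0"
  shows "expectation (\<lambda>\<omega>. (cmod (X \<omega> + Y \<omega>))\<^sup>2)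
       = expectation (\<lambda>\<omega>. (cmod (X \<omega>))\<^sup>2) + expectation (\<lambda>\<omega>. (cmod (Y \<omega>))\<^sup>2)"
proof -
  have indep_cnj: "indep_var borel X borel (\<lambda>\<omega>. cnj (Y \<omega>))"
    using indep_var_compose[OF indep measurable_ident_sets[OF refl]
        borel_measurable_continuous_onI[OF continuous_on_cnj[OF continuous_on_id]]]
    by (simp add: comp_def)
  have "expectation (\<lambda>\<omega>. X \<omega> * cnj (Y \<omega>)) = expectation X * expectation (\<lambda>\<omega>. cnj (Y \<omega>))"
    using X Y
    by (intro indep_var_lebesgue_integral[OF indep_cnj] integrable_if_square_integrable
        square_integrable_cnj)
  also have "\<dots> = 0"
    by (simp only: Bochner_Integration.integral_cnj \<open>expectation Y = 0\<close> complex_cnj_zero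
        mult_zero_right)
  finally have cross: "expectation (\<lambda>\<omega>. X \<omega> * cnj (Y \<omega>)) = 0" .
  have cross_integrable: "integrable M (\<lambda>\<omega>. X \<omega> * cnj (Y \<omega>))"
    using X Y by (intro integrable_mult_square_integrable square_integrable_cnj)
  have "expectation (\<lambda>\<omega>. (cmod (X \<omega> + Y \<omega>))\<^sup>2)
      = expectation (\<lambda>\<omega>. ((cmod (X \<omega>))\<^sup>2 + (cmod (Y \<omega>))\<^sup>2) + 2 * Re (X \<omega> * cnj (Y \<omega>)))"
    by (simp add: cmod_power2 power2_sum algebra_simps)
  also have "\<dots> = expectation (\<lambda>\<omega>. (cmod (X \<omega>))\<^sup>2 + (cmod (Y \<omega>))\<^sup>2)
      + expectation (\<lambda>\<omega>. 2 * Re (X \<omega> * cnj (Y \<omega>)))"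
    using square_integrableD(2)[OF X] square_integrableD(2)[OF Y] cross_integrable
    by (intro Bochner_Integration.integral_add Bochner_Integration.integrable_add
        integrable_mult_right integrable_Re)
  also have "expectation (\<lambda>\<omega>. 2 * Re (X \<omega> * cnj (Y \<omega>))) = 0"
    by (simp only: integral_mult_right_zero integral_Re[OF cross_integrable] cross zero_complex.sel
        mult_zero_right)
  also have "expectation (\<lambda>\<omega>. (cmod (X \<omega>))\<^sup>2 + (cmod (Y \<omega>))\<^sup>2)
      = expectation (\<lambda>\<omega>. (cmod (X \<omega>))\<^sup>2) + expectation (\<lambda>\<omega>. (cmod (Y \<omega>))\<^sup>2)"
    using square_integrableD(2)[OF X] square_integrableD(2)[OF Y]
    by (rule Bochner_Integration.integral_add)
  finally show ?thesis
    by simp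
qed

lemma indep_vars_covariance:
  fixes N :: "'i \<Rightarrow> 'a \<Rightarrow> real"
  assumes "indep_vars (\<lambda>_. borel) N I" "t \<in> I" "u \<in> I" "t \<noteq> u"
    and "integrable M (N t)" "integrable M (N u)" "expectation (N t) = 0"
  shows "expectation (\<lambda>\<omega>. N t \<omega> * N u \<omega>) = 0"
proof -
  have "indep_vars (\<lambda>_. borel) N {t, u}"
    using assms by (auto intro: indep_vars_subset)
  then have "expectation (\<lambda>\<omega>. \<Prod>i\<in>{t, u}. N i \<omega>) = (\<Prod>i\<in>{t, u}. expectation (N i))"
    using assms by (intro indep_vars_lebesgue_integral) auto
  then show ?thesis using assms by simp
qed

lemma second_moment_indep_sum:
  fixes N :: "'i \<Rightarrow> 'a \<Rightarrow> real" and \<beta> :: "'i \<Rightarrow> complex"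
  assumes "indep_vars (\<lambda>_. borel) N I" "finite I"
    and "\<And>t. t \<in> I \<Longrightarrow> square_integrable M (N t)"
    and "\<And>t. t \<in> I \<Longrightarrow> expectation (N t) = 0"
    and "\<And>t. t \<in> I \<Longrightarrow> expectation (\<lambda>\<omega>. (N t \<omega>)\<^sup>2) = v"
  shows "expectation (\<lambda>\<omega>. (cmod (\<Sum>t\<in>I. \<beta> t * of_real (N t \<omega>)))\<^sup>2) = v * (\<Sum>t\<in>I. (cmod (\<beta> t))\<^sup>2)"
proof -
  have covariance: "expectation (\<lambda>\<omega>. N t \<omega> * N u \<omega>) = (if t = u then v else 0)"
    if "t \<in> I" "u \<in> I" for t u
    using assms that indep_vars_covariance[of N I t u]
    by (auto simp: power2_eq_square integrable_if_square_integrable)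
  have cmod_square: "(cmod z)\<^sup>2 = Re (z * cnj z)" for z
    by (metis Re_complex_of_real complex_norm_square)
  have "expectation (\<lambda>\<omega>. (cmod (\<Sum>t\<in>I. \<beta> t * of_real (N t \<omega>)))\<^sup>2)
      = expectation (\<lambda>\<omega>. \<Sum>t\<in>I. \<Sum>u\<in>I. Re (\<beta> t * cnj (\<beta> u)) * (N t \<omega> * N u \<omega>))"
    by (simp add: cmod_square sum_product Re_sum cnj_sum sum.distrib algebra_simps)
  also have "\<dots> = (\<Sum>t\<in>I. \<Sum>u\<in>I. Re (\<beta> t * cnj (\<beta> u)) * expectation (\<lambda>\<omega>. N t \<omega> * N u \<omega>))"
    using assms by (simp add: integrable_mult_square_integrable)
  also have "\<dots> = (\<Sum>t\<in>I. \<Sum>u\<in>I. if t = u then Re (\<beta> t * cnj (\<beta> u)) * v else 0)"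
    by (intro sum.cong refl) (simp add: covariance)
  also have "\<dots> = (\<Sum>t\<in>I. Re (\<beta> t * cnj (\<beta> t)) * v)"
    by (rule sum.cong[OF refl]) (use assms(2) in \<open>simp only: sum.delta', simp\<close>)
  also have "\<dots> = v * (\<Sum>t\<in>I. (cmod (\<beta> t))\<^sup>2)"
    by (simp only: cmod_square sum_distrib_left mult.commute)
  finally show ?thesis .
qed

lemma quadratic_form_second_moment:
  fixes G :: "'i \<Rightarrow> 'a \<Rightarrow> complex"
  assumes "finite I" "\<And>m. m \<in> I \<Longrightarrow> square_integrable M (G m)"
  shows "(\<Sum>m\<in>I. \<Sum>m'\<in>I. cnj (x m) * expectation (\<lambda>\<omega>. G m \<omega> * cnj (G m' \<omega>)) * x m')
    = complex_of_real (expectation (\<lambda>\<omega>. (cmod (\<Sum>m\<in>I. cnj (x m) * G m \<omega>))\<^sup>2))"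
proof -
  have integrable: "integrable M (\<lambda>\<omega>. cnj (x m) * (G m \<omega> * cnj (G m' \<omega>)) * x m')"
    if "m \<in> I" "m' \<in> I" for m m'
    using assms(2)[OF that(1)] assms(2)[OF that(2)]
    by (intro integrable_mult_left integrable_mult_right integrable_mult_square_integrable
        square_integrable_cnj)
  have "(\<Sum>m\<in>I. \<Sum>m'\<in>I. cnj (x m) * expectation (\<lambda>\<omega>. G m \<omega> * cnj (G m' \<omega>)) * x m')
      = expectation (\<lambda>\<omega>. \<Sum>m\<in>I. \<Sum>m'\<in>I. cnj (x m) * (G m \<omega> * cnj (G m' \<omega>)) * x m')"
    using integrable
    by (simp add: Bochner_Integration.integral_sum Bochner_Integration.integrable_sum)
  also have "\<dots> = expectation (\<lambda>\<omega>. complex_of_real ((cmod (\<Sum>m\<in>I. cnj (x m) * G m \<omega>))\<^sup>2))"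
    by (simp only: complex_norm_square cnj_sum complex_cnj_mult complex_cnj_cnj sum_product)
       (simp add: mult_ac)
  finally show ?thesis
    by (simp only: integral_complex_of_real)
qed

end

section \<open>Trigonometric polynomials on Z/MZ\<close>

definition unity_root :: "nat \<Rightarrow> int \<Rightarrow> complex" where
  "unity_root M d = cis (2 * pi * of_int d / of_nat M)"

lemma unity_root_add: "unity_root M (d + e) = unity_root M d * unity_root M e"
  by (simp add: unity_root_def cis_mult add_divide_distrib distrib_left)

lemma unity_root_cnj: "cnj (unity_root M d) = unity_root M (- d)"
  by (simp add: unity_root_def cis_cnj)

lemma unity_root_power: "unity_root M d ^ k = unity_root M (d * int k)"
  unfolding unity_root_def Complex.DeMoivre by (simp add: mult_ac)

lemma unity_root_multiple:
  assumes "M > 0"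
  shows "unity_root M (int M * k) = 1"
proof -
  have "2 * pi * of_int (int M * k) / of_nat M = 2 * pi * of_int k"
    using assms by simp
  then show ?thesis
    by (simp add: unity_root_def)
qed

lemma unity_root_neq_1:
  assumes "d \<noteq> 0" "\<bar>d\<bar> < int M"
  shows "unity_root M d \<noteq> 1"
proof
  assume "unity_root M d = 1"
  then have "cos (2 * pi * of_int d / of_nat M) = 1"
    by (simp add: unity_root_def complex_eq_iff)
  then obtain n :: int where "2 * pi * of_int d / of_nat M = of_int n * 2 * pi"
    by (auto simp: cos_one_2pi_int)
  then have "d = n * int M"
    using assms by (simp add: field_simps) (metis of_int_eq_iff of_int_mult of_int_of_nat_eq)
  with assms show False
    by (cases "n = 0") (auto simp: abs_mult dest: mult_left_mono[of 1 "\<bar>n\<bar>" "int M"])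
qed

lemma sum_unity_root_orthogonal:
  assumes "m < M" "m' < M"
  shows "(\<Sum>r<M. unity_root M ((int m - int m') * int r)) = (if m = m' then of_nat M else 0)"
proof (cases "m = m'")
  case False
  define \<omega> where "\<omega> = unity_root M (int m - int m')"
  have "\<omega> \<noteq> 1"
    unfolding \<omega>_def using False assms by (intro unity_root_neq_1) auto
  have "\<omega> ^ M = 1"
    using unity_root_multiple[of M "int m - int m'"] assms
    by (simp add: \<omega>_def unity_root_power mult.commute)
  have "(\<Sum>r<M. unity_root M ((int m - int m') * int r)) = (\<Sum>r<M. \<omega> ^ r)"
    by (simp add: \<omega>_def unity_root_power)
  also have "\<dots> = 0"
    using \<open>\<omega> \<noteq> 1\<close> \<open>\<omega> ^ M = 1\<close> by (simp add: geometric_sum)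
  finally show ?thesis
    using False by simp
qed (simp add: unity_root_def)

definition fourier_sum :: "nat \<Rightarrow> (nat \<Rightarrow> complex) \<Rightarrow> int \<Rightarrow> complex" where
  "fourier_sum M x d = (\<Sum>m<M. x m * unity_root M (int m * d))"

lemma fourier_sum_periodic:
  assumes "M > 0" "int M dvd p"
  shows "fourier_sum M x (d + p) = fourier_sum M x d"
proof -
  obtain k where "p = int M * k"
    using assms(2) by blast
  then have "unity_root M (int m * (d + p)) = unity_root M (int m * d)" for m
    using unity_root_multiple[OF assms(1), of "int m * k"]
    by (simp add: distrib_left unity_root_add mult_ac)
  then show ?thesis
    by (simp add: fourier_sum_def)
qed

lemma fourier_sum_mod:
  assumes "M > 0" "int M dvd p"
  shows "fourier_sum M x (d mod p) = fourier_sum M x d"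
  using fourier_sum_periodic[OF assms(1), of "- (p * (d div p))" x d] assms(2)
  by (simp add: minus_div_mult_eq_mod[symmetric] algebra_simps)

lemma parseval_fourier_sum:
  "(\<Sum>r<M. (cmod (fourier_sum M x (int r)))\<^sup>2) = real M * (\<Sum>m<M. (cmod (x m))\<^sup>2)"
proof -
  have product: "x m * unity_root M (int m * int r) * cnj (x m' * unity_root M (int m' * int r))
      = x m * cnj (x m') * unity_root M ((int m - int m') * int r)" for m m' r
  proof -
    have "unity_root M (int m * int r) * unity_root M (- (int m' * int r))
        = unity_root M ((int m - int m') * int r)"
      by (simp add: left_diff_distrib flip: unity_root_add)
    then show ?thesis
      by (simp add: unity_root_cnj mult_ac)
  qed
  have "complex_of_real (\<Sum>r<M. (cmod (fourier_sum M x (int r)))\<^sup>2)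
      = (\<Sum>r<M. fourier_sum M x (int r) * cnj (fourier_sum M x (int r)))"
    by (simp only: of_real_sum complex_norm_square)
  also have "\<dots> = (\<Sum>r<M. \<Sum>m<M. \<Sum>m'<M. x m * cnj (x m') * unity_root M ((int m - int m') * int r))"
    unfolding fourier_sum_def cnj_sum sum_product product ..
  also have "\<dots> = (\<Sum>m<M. \<Sum>r<M. \<Sum>m'<M. x m * cnj (x m') * unity_root M ((int m - int m') * int r))"
    by (rule sum.swap)
  also have "\<dots> = (\<Sum>m<M. \<Sum>m'<M. \<Sum>r<M. x m * cnj (x m') * unity_root M ((int m - int m') * int r))"
    by (rule sum.cong[OF refl]) (rule sum.swap)
  also have "\<dots> = (\<Sum>m<M. x m * cnj (x m) * of_nat M)"
  proof (rule sum.cong[OF refl])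
    fix m assume "m \<in> {..<M}"
    then have "(\<Sum>m'<M. \<Sum>r<M. x m * cnj (x m') * unity_root M ((int m - int m') * int r))
        = (\<Sum>m'<M. if m = m' then x m * cnj (x m') * of_nat M else 0)"
      by (intro sum.cong refl) (simp add: sum_unity_root_orthogonal flip: sum_distrib_left)
    also have "\<dots> = x m * cnj (x m) * of_nat M"
      using \<open>m \<in> {..<M}\<close> by simp
    finally show "(\<Sum>m'<M. \<Sum>r<M. x m * cnj (x m') * unity_root M ((int m - int m') * int r))
        = x m * cnj (x m) * of_nat M" .
  qed
  also have "\<dots> = complex_of_real (real M * (\<Sum>m<M. (cmod (x m))\<^sup>2))"
    by (simp only: of_real_mult of_real_sum complex_norm_square of_real_of_nat_eq sum_distrib_left
        mult.commute)
  finally show ?thesis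
    by (simp only: of_real_eq_iff)
qed

section \<open>The window bound\<close>

lemma sum_shift_periodic:
  fixes f :: "int \<Rightarrow> 'b::comm_monoid_add"
  assumes "L > 0" and periodic: "\<And>d. f (d mod int L) = f d"
  shows "(\<Sum>t<L. f (int t - c)) = (\<Sum>t<L. f (int t))"
proof (rule sum.reindex_bij_witness[where j = "\<lambda>t. nat ((int t - c) mod int L)"
      and i = "\<lambda>s. nat ((int s + c) mod int L)"])
  fix t assume "t \<in> {..<L}"
  then show "nat ((int (nat ((int t - c) mod int L)) + c) mod int L) = t"
    using \<open>L > 0\<close> by (simp add: mod_add_left_eq)
  show "nat ((int t - c) mod int L) \<in> {..<L}"
    using \<open>L > 0\<close> by (simp add: nat_less_iff)
  show "f (int (nat ((int t - c) mod int L))) = f (int t - c)"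
    using \<open>L > 0\<close> periodic by simp
next
  fix s assume "s \<in> {..<L}"
  then show "nat ((int (nat ((int s + c) mod int L)) - c) mod int L) = s"
    using \<open>L > 0\<close> by (simp add: mod_diff_left_eq)
  show "nat ((int s + c) mod int L) \<in> {..<L}"
    using \<open>L > 0\<close> by (simp add: nat_less_iff)
qed

lemma sum_blocks:
  fixes F :: "nat \<Rightarrow> 'b::comm_monoid_add"
  shows "(\<Sum>s<b * M. F s) = (\<Sum>r<M. \<Sum>k<b. F (r + k * M))"
proof -
  have "(\<Sum>s<b * M. F s) = (\<Sum>k<b. \<Sum>s\<in>{k * M..<k * M + M}. F s)"
    by (rule sum.nat_group[symmetric])
  also have "\<dots> = (\<Sum>k<b. \<Sum>r<M. F (r + k * M))"
    using sum.shift_bounds_nat_ivl[of F 0 "_ * M" M]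
    by (simp add: atLeast0LessThan add.commute)
  also have "\<dots> = (\<Sum>r<M. \<Sum>k<b. F (r + k * M))"
    by (rule sum.swap)
  finally show ?thesis .
qed

lemma Kg_nonneg:
  assumes "0 < L"
  shows "0 \<le> Kg L b g"
  unfolding Kg_def using assms by (intro Min.boundedI) (auto intro!: sum_nonneg)

lemma window_fourier_lower_bound:
  assumes "L = b * M" "0 < b" "0 < M"
  shows "Kg L b g * real M * (\<Sum>m<M. (cmod (x m))\<^sup>2)
    \<le> (\<Sum>t<L. (cmod (per L g (int t - c)))\<^sup>2 * (cmod (fourier_sum M x (int t - c)))\<^sup>2)"
proof -
  define f where "f d = (cmod (per L g d))\<^sup>2 * (cmod (fourier_sum M x d))\<^sup>2" for d
  have M_dvd_L: "int M dvd int L"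
    using assms(1) by simp
  have "f (d mod int L) = f d" for d
    using fourier_sum_mod[OF \<open>0 < M\<close> M_dvd_L] by (simp add: f_def per_def)
  then have "(\<Sum>t<L. f (int t - c)) = (\<Sum>s<b * M. f (int s))"
    using assms by (subst sum_shift_periodic) simp_all
  also have "\<dots> = (\<Sum>r<M. (cmod (fourier_sum M x (int r)))\<^sup>2
      * (\<Sum>k<b. (cmod (per L g (int r + int k * int M)))\<^sup>2))"
    unfolding sum_blocks[of _ b M]
    using fourier_sum_periodic[OF \<open>0 < M\<close>, of "int k * int M" x for k]
    by (simp add: f_def sum_distrib_left mult.commute)
  finally have blocks: "(\<Sum>t<L. f (int t - c)) = \<dots>" .
  have Kg_le: "Kg L b g \<le> (\<Sum>k<b. (cmod (per L g (int r + int k * int M)))\<^sup>2)" if "r < M" for r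
    unfolding Kg_def using that assms by (intro Min_le) (auto intro!: imageI simp: less_le_trans)
  have "Kg L b g * real M * (\<Sum>m<M. (cmod (x m))\<^sup>2)
      = (\<Sum>r<M. (cmod (fourier_sum M x (int r)))\<^sup>2 * Kg L b g)"
    by (simp add: parseval_fourier_sum flip: sum_distrib_right)
  also have "\<dots> \<le> (\<Sum>r<M. (cmod (fourier_sum M x (int r)))\<^sup>2
      * (\<Sum>k<b. (cmod (per L g (int r + int k * int M)))\<^sup>2))"
    by (intro sum_mono mult_left_mono Kg_le) simp_all
  finally show ?thesis
    using blocks by (simp add: f_def)
qed

section \<open>Coercive matrices are invertible\<close>

lemma det_neq_0_if_coercive:
  fixes C :: "nat \<Rightarrow> nat \<Rightarrow> complex"
  assumes coercive: "\<And>x. c * (\<Sum>m<n. (cmod (x m))\<^sup>2) \<le> Re (\<Sum>m<n. \<Sum>m'<n. cnj (x m) * C m m' * x m')"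
    and "c > 0"
  shows "det (mat n n (\<lambda>(i, j). C i j)) \<noteq> 0"
proof
  let ?A = "mat n n (\<lambda>(i, j). C i j)"
  assume "det ?A = 0"
  then obtain v where v: "v \<in> carrier_vec n" "v \<noteq> 0\<^sub>v n" "?A *\<^sub>v v = 0\<^sub>v n"
    using det_0_iff_vec_prod_zero_field[of ?A n] by auto
  have "(\<Sum>m'<n. C m m' * v $ m') = 0" if "m < n" for m
  proof -
    have "(\<Sum>m'<n. C m m' * v $ m') = (?A *\<^sub>v v) $ m"
      using that v(1) by (simp add: scalar_prod_def atLeast0LessThan)
    then show ?thesis
      using that v(3) by simp
  qed
  then have "(\<Sum>m<n. \<Sum>m'<n. cnj (v $ m) * C m m' * v $ m') = 0"
    by (simp add: mult.assoc flip: sum_distrib_left)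
  moreover obtain i where i: "i < n" "v $ i \<noteq> 0"
    using v(1,2) by (metis carrier_vecD eq_vecI index_zero_vec)
  then have "0 < c * (\<Sum>m<n. (cmod (v $ m))\<^sup>2)"
    using \<open>c > 0\<close> by (intro mult_pos_pos sum_pos2[of _ i]) auto
  ultimately show False
    using coercive[of "\<lambda>m. v $ m"] by simp
qed

lemma matrix_inverse_if_det_neq_0:
  fixes C :: "nat \<Rightarrow> nat \<Rightarrow> 'a::field"
  assumes "det (mat n n (\<lambda>(i, j). C i j)) \<noteq> 0"
  shows "\<exists>D. (\<forall>i<n. \<forall>j<n. (\<Sum>k<n. C i k * D k j) = (if i = j then 1 else 0))
      \<and> (\<forall>i<n. \<forall>j<n. (\<Sum>k<n. D i k * C k j) = (if i = j then 1 else 0))"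
proof -
  define A where "A = mat n n (\<lambda>(i, j). C i j)"
  have A: "A \<in> carrier_mat n n"
    by (simp add: A_def)
  obtain B where B: "B \<in> carrier_mat n n" "B * A = 1\<^sub>m n" "A * B = 1\<^sub>m n"
    using det_non_zero_imp_unit[OF A assms[folded A_def], of "()"]
    unfolding Units_def ring_mat_def by auto
  have "(A * B) $$ (i, j) = (\<Sum>k\<in>{0..<n}. C i k * B $$ (k, j))"
    "(B * A) $$ (i, j) = (\<Sum>k\<in>{0..<n}. B $$ (i, k) * C k j)" if "i < n" "j < n" for i j
    using that B(1) by (simp_all add: A_def scalar_prod_def)
  then show ?thesis
    using B(2,3) by (intro exI[of _ "\<lambda>i j. B $$ (i, j)"]) (simp add: atLeast0LessThan)
qed

section \<open>The frequency-shifted Gabor slice of a noisy signal\<close>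

lemma sum_mult_sum_swap:
  fixes u :: "'i \<Rightarrow> 'b::comm_semiring_0"
  shows "(\<Sum>m\<in>I. u m * (\<Sum>t\<in>T. a m t * f t)) = (\<Sum>t\<in>T. (\<Sum>m\<in>I. u m * a m t) * f t)"
proof -
  have "(\<Sum>m\<in>I. u m * (\<Sum>t\<in>T. a m t * f t)) = (\<Sum>m\<in>I. \<Sum>t\<in>T. u m * a m t * f t)"
    by (simp add: sum_distrib_left mult.assoc)
  also have "\<dots> = (\<Sum>t\<in>T. \<Sum>m\<in>I. u m * a m t * f t)"
    by (rule sum.swap)
  finally show ?thesis
    by (simp add: sum_distrib_right)
qed

locale signal_plus_white_noise = prob_space +
  fixes L :: nat and \<sigma> :: real and N :: "nat \<Rightarrow> 'a \<Rightarrow> real" and Z :: "nat \<Rightarrow> 'a \<Rightarrow> complex"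
  assumes sigma_pos: "\<sigma> > 0"
    and noise_indep: "indep_vars (\<lambda>_. borel) N {..<L}"
    and noise_normal: "\<forall>t<L. distributed M lborel (N t) (normal_density 0 \<sigma>)"
    and signal_square_integrable: "\<And>t. t < L \<Longrightarrow> square_integrable M (Z t)"
    and signal_noise_indep: "indep_var
         (PiM {..<L} (\<lambda>_. borel :: complex measure)) (\<lambda>\<omega>. restrict (\<lambda>t. Z t \<omega>) {..<L})
         (PiM {..<L} (\<lambda>_. borel :: complex measure))
           (\<lambda>\<omega>. restrict (\<lambda>t. complex_of_real (N t \<omega>)) {..<L})"
begin

lemma noise_moments:
  assumes "t < L"
  shows "square_integrable M (N t)" "expectation (N t) = 0" "expectation (\<lambda>\<omega>. (N t \<omega>)\<^sup>2) = \<sigma>\<^sup>2"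
proof -
  have D: "distributed M lborel (N t) (normal_density 0 \<sigma>)"
    using noise_normal assms by blast
  show "square_integrable M (N t)"
    using normal_distributed_square_integrable[OF sigma_pos D] .
  show "expectation (N t) = 0"
    using normal_distributed_expectation[OF sigma_pos D] .
  then show "expectation (\<lambda>\<omega>. (N t \<omega>)\<^sup>2) = \<sigma>\<^sup>2"
    using normal_distributed_variance[OF sigma_pos D] by simp
qed

lemma square_integrable_signal: "square_integrable M (\<lambda>\<omega>. \<Sum>t<L. \<alpha> t * Z t \<omega>)"
  using signal_square_integrable by (intro square_integrable_sum square_integrable_mult_left) simp

lemma square_integrable_noise:
  fixes \<beta> :: "nat \<Rightarrow> complex"
  shows "square_integrable M (\<lambda>\<omega>. \<Sum>t<L. \<beta> t * of_real (N t \<omega>))"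
  using noise_moments(1)
  by (intro square_integrable_sum square_integrable_mult_left square_integrable_of_real) simp

lemma second_moment_signal_plus_noise_ge:
  "\<sigma>\<^sup>2 * (\<Sum>t<L. (cmod (\<beta> t))\<^sup>2)
    \<le> expectation (\<lambda>\<omega>. (cmod ((\<Sum>t<L. \<alpha> t * Z t \<omega>) + (\<Sum>t<L. \<beta> t * of_real (N t \<omega>))))\<^sup>2)"
proof -
  have indep: "indep_var borel (\<lambda>\<omega>. \<Sum>t<L. \<alpha> t * Z t \<omega>) borel (\<lambda>\<omega>. \<Sum>t<L. \<beta> t * of_real (N t \<omega>))"
    using indep_var_compose[OF signal_noise_indep,
        of "\<lambda>z. \<Sum>t<L. \<alpha> t * z t" borel "\<lambda>z. \<Sum>t<L. \<beta> t * z t" borel]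
    by (simp add: comp_def)
  have centred: "expectation (\<lambda>\<omega>. \<Sum>t<L. \<beta> t * of_real (N t \<omega>)) = 0"
    using noise_moments(1,2) by (simp add: integrable_if_square_integrable)
  have "expectation (\<lambda>\<omega>. (cmod ((\<Sum>t<L. \<alpha> t * Z t \<omega>) + (\<Sum>t<L. \<beta> t * of_real (N t \<omega>))))\<^sup>2)
      = expectation (\<lambda>\<omega>. (cmod (\<Sum>t<L. \<alpha> t * Z t \<omega>))\<^sup>2)
      + expectation (\<lambda>\<omega>. (cmod (\<Sum>t<L. \<beta> t * of_real (N t \<omega>)))\<^sup>2)"
    using square_integrable_signal square_integrable_noise
    by (rule second_moment_add_indep[OF indep _ _ centred])
  also have "expectation (\<lambda>\<omega>. (cmod (\<Sum>t<L. \<beta> t * of_real (N t \<omega>)))\<^sup>2)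
      = \<sigma>\<^sup>2 * (\<Sum>t<L. (cmod (\<beta> t))\<^sup>2)"
    by (rule second_moment_indep_sum[OF noise_indep _ noise_moments]) simp_all
  finally show ?thesis
    by simp
qed

lemma gabor_second_moment_ge:
  fixes A :: "nat \<Rightarrow> nat \<Rightarrow> complex" and g :: "nat \<Rightarrow> complex"
  assumes L: "L = b * K" "0 < b" "0 < K"
    and G: "\<And>m \<omega>. G m \<omega> = (\<Sum>t<L. A m t * Z t \<omega>)
      + (\<Sum>t<L. cnj (per L g (int t - c)) * cnj (unity_root K (int m * (int t - c)))
          * of_real (N t \<omega>))"
  shows "\<sigma>\<^sup>2 * (Kg L b g * real K * (\<Sum>m<K. (cmod (x m))\<^sup>2))
    \<le> expectation (\<lambda>\<omega>. (cmod (\<Sum>m<K. cnj (x m) * G m \<omega>))\<^sup>2)"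
proof -
  define \<alpha> where "\<alpha> t = (\<Sum>m<K. cnj (x m) * A m t)" for t
  define \<beta> where "\<beta> t = cnj (per L g (int t - c) * fourier_sum K x (int t - c))" for t
  have \<beta>_eq: "(\<Sum>m<K. cnj (x m) * (cnj (per L g (int t - c))
      * cnj (unity_root K (int m * (int t - c))))) = \<beta> t" for t
    by (simp add: \<beta>_def fourier_sum_def cnj_sum sum_distrib_left mult_ac)
  have "Kg L b g * real K * (\<Sum>m<K. (cmod (x m))\<^sup>2) \<le> (\<Sum>t<L. (cmod (\<beta> t))\<^sup>2)"
    using window_fourier_lower_bound[OF L, of g x c]
    by (simp add: \<beta>_def norm_mult power_mult_distrib)
  then have "\<sigma>\<^sup>2 * (Kg L b g * real K * (\<Sum>m<K. (cmod (x m))\<^sup>2)) \<le> \<sigma>\<^sup>2 * (\<Sum>t<L. (cmod (\<beta> t))\<^sup>2)"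
    by (rule mult_left_mono) simp
  also have "\<dots> \<le> expectation (\<lambda>\<omega>. (cmod ((\<Sum>t<L. \<alpha> t * Z t \<omega>) + (\<Sum>t<L. \<beta> t * of_real (N t \<omega>))))\<^sup>2)"
    by (rule second_moment_signal_plus_noise_ge)
  also have "\<dots> = expectation (\<lambda>\<omega>. (cmod (\<Sum>m<K. cnj (x m) * G m \<omega>))\<^sup>2)"
    by (simp only: G distrib_left sum.distrib sum_mult_sum_swap \<beta>_eq \<alpha>_def[symmetric])
  finally show ?thesis .
qed

lemma gabor_covariance_coercive:
  fixes A :: "nat \<Rightarrow> nat \<Rightarrow> complex" and g x :: "nat \<Rightarrow> complex"
  assumes L: "L = b * K" "0 < b" "0 < K"
    and G: "\<And>m \<omega>. G m \<omega> = (\<Sum>t<L. A m t * Z t \<omega>)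
      + (\<Sum>t<L. cnj (per L g (int t - c)) * cnj (unity_root K (int m * (int t - c)))
          * of_real (N t \<omega>))"
  defines "Q \<equiv> (\<Sum>m<K. \<Sum>m'<K. cnj (x m) * expectation (\<lambda>\<omega>. G m \<omega> * cnj (G m' \<omega>)) * x m')"
  shows "Im Q = 0" and "\<sigma>\<^sup>2 * Kg L b g * (\<Sum>m<K. (cmod (x m))\<^sup>2) \<le> Re Q"
proof -
  have "square_integrable M (G m)" for m
    unfolding G[abs_def]
    by (intro square_integrable_add square_integrable_signal square_integrable_noise)
  then have Q_eq: "Q = complex_of_real (expectation (\<lambda>\<omega>. (cmod (\<Sum>m<K. cnj (x m) * G m \<omega>))\<^sup>2))"
    unfolding Q_def by (intro quadratic_form_second_moment) simp_all
  then show "Im Q = 0"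
    by simp
  have "\<sigma>\<^sup>2 * Kg L b g * (\<Sum>m<K. (cmod (x m))\<^sup>2) * 1
      \<le> \<sigma>\<^sup>2 * Kg L b g * (\<Sum>m<K. (cmod (x m))\<^sup>2) * real K"
    using L Kg_nonneg[of L b g]
    by (intro mult_left_mono) (auto intro!: mult_nonneg_nonneg sum_nonneg)
  also have "\<dots> \<le> expectation (\<lambda>\<omega>. (cmod (\<Sum>m<K. cnj (x m) * G m \<omega>))\<^sup>2)"
    using gabor_second_moment_ge[OF L G, of x] by (simp add: mult_ac)
  finally show "\<sigma>\<^sup>2 * Kg L b g * (\<Sum>m<K. (cmod (x m))\<^sup>2) \<le> Re Q"
    using Q_eq by simp
qed

end

theorem mainTheorem3:
  fixes P :: "'w measure"
    and L a b :: nat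
    and g :: "nat \<Rightarrow> complex"
    and \<sigma>\<^sub>0 :: real
    and N :: "nat \<Rightarrow> 'w \<Rightarrow> real"
    and Z :: "nat \<Rightarrow> 'w \<Rightarrow> complex"
    and n :: int
    and \<delta> :: real
    and G :: "nat \<Rightarrow> 'w \<Rightarrow> complex"
    and C :: "nat \<Rightarrow> nat \<Rightarrow> complex"
  assumes prob: "prob_space P"
    and L_pos: "L > 0"
    and a_pos: "a > 0" and a_dvd: "a dvd L"
    and b_pos: "b > 0" and b_dvd: "b dvd L"
    and K_pos: "Kg L b g > 0"
    and \<sigma>_pos: "\<sigma>\<^sub>0 > 0"
    and N_indep: "prob_space.indep_vars P (\<lambda>_. borel) N {..<L}"
    and N_distr: "\<forall>t<L. distributed P lborel (N t) (normal_density 0 \<sigma>\<^sub>0)"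
    and Z_gauss: "complex_gaussian_signal P L Z"
    and Z_mean: "\<forall>t<L. integral\<^sup>L P (Z t) = 0"
    and ZN_indep: "prob_space.indep_var P
         (PiM {..<L} (\<lambda>_. borel :: complex measure)) (\<lambda>\<omega>. restrict (\<lambda>t. Z t \<omega>) {..<L})
         (PiM {..<L} (\<lambda>_. borel :: complex measure))
           (\<lambda>\<omega>. restrict (\<lambda>t. complex_of_real (N t \<omega>)) {..<L})"
    and G_def: "\<forall>m \<omega>. G m \<omega> =
         (\<Sum>t<L. Z t \<omega> * cnj (per L g (int t - n * int a)) *
            exp (- 2 * \<i> * complex_of_real pi * (of_nat m - of_real \<delta>) *
                 of_int (int t - int a * n) / of_nat (L div b)))
       + (\<Sum>t<L. complex_of_real (N t \<omega>) * cnj (per L g (int t - n * int a)) *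
            exp (- 2 * \<i> * complex_of_real pi * of_nat m * of_nat b *
                 of_int (int t - n * int a) / of_nat L))"
    and C_def: "\<forall>m m'. C m m' = integral\<^sup>L P (\<lambda>\<omega>. G m \<omega> * cnj (G m' \<omega>))"
  shows "(\<forall>x :: nat \<Rightarrow> complex.
            Im (\<Sum>m<L div b. \<Sum>m'<L div b. cnj (x m) * C m m' * x m') = 0 \<and>
            Re (\<Sum>m<L div b. \<Sum>m'<L div b. cnj (x m) * C m m' * x m')
              \<ge> \<sigma>\<^sub>0\<^sup>2 * Kg L b g * (\<Sum>m<L div b. (cmod (x m))\<^sup>2))
       \<and> (\<exists>D :: nat \<Rightarrow> nat \<Rightarrow> complex.
            (\<forall>i<L div b. \<forall>j<L div b.
               (\<Sum>k<L div b. C i k * D k j) = (if i = j then 1 else 0)) \<and>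
            (\<forall>i<L div b. \<forall>j<L div b.
               (\<Sum>k<L div b. D i k * C k j) = (if i = j then 1 else 0)))"
proof -
  define K where "K = L div b"
  have L_eq: "L = b * K" and K_gt_0: "0 < K"
    using b_dvd L_pos by (auto simp: K_def)
  interpret signal_plus_white_noise P L \<sigma>\<^sub>0 N Z
  proof -
    interpret prob_space P by (rule prob)
    show "signal_plus_white_noise P L \<sigma>\<^sub>0 N Z"
      using \<sigma>_pos N_indep N_distr ZN_indep complex_gaussian_signal_square_integrable[OF Z_gauss]
      by unfold_locales auto
  qed
  define A where "A m t = exp (- 2 * \<i> * complex_of_real pi * (of_nat m - of_real \<delta>) *
    of_int (int t - int a * n) / of_nat (L div b)) * cnj (per L g (int t - n * int a))" for m t
  have noise_kernel: "exp (- 2 * \<i> * complex_of_real pi * of_nat m * of_nat b * of_int d / of_nat L)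
      = cnj (unity_root K (int m * d))" for m d
    using b_pos K_gt_0 by (simp add: unity_root_def cis_cnj cis_conv_exp exp_cnj L_eq field_simps)
  have G_eq: "G m \<omega> = (\<Sum>t<L. A m t * Z t \<omega>) + (\<Sum>t<L. cnj (per L g (int t - n * int a))
      * cnj (unity_root K (int m * (int t - n * int a))) * of_real (N t \<omega>))" for m \<omega>
    unfolding G_def[rule_format] A_def noise_kernel by (simp only: mult_ac)
  have quadratic: "Im (\<Sum>m<K. \<Sum>m'<K. cnj (x m) * C m m' * x m') = 0 \<and>
      \<sigma>\<^sub>0\<^sup>2 * Kg L b g * (\<Sum>m<K. (cmod (x m))\<^sup>2) \<le> Re (\<Sum>m<K. \<Sum>m'<K. cnj (x m) * C m m' * x m')" for x
    using gabor_covariance_coercive[OF L_eq b_pos K_gt_0 G_eq, of x] C_def by simp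
  then have "det (mat K K (\<lambda>(i, j). C i j)) \<noteq> 0"
    using K_pos \<sigma>_pos by (intro det_neq_0_if_coercive[of "\<sigma>\<^sub>0\<^sup>2 * Kg L b g"]) auto
  then show ?thesis
    using quadratic matrix_inverse_if_det_neq_0 unfolding K_def by blast
qed

end
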